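(* With $\beta=1/p^2$, the lattice $\varphi_\beta(M)\subset\mathbb{R}^n$ is a rotated version of $D_n$, i.e. $\varphi_\beta(M)=D_nQ$ for some real orthogonal $n\times n$ matrix $Q$.
   Context: Let $n>1$ be an odd integer and $p$ a prime with $p\equiv 1 \pmod n$. Let $\zeta_p=e^{2\pi i/p}$, let $r$ be a primitive root modulo $p$, and let $\sigma$ be the automorphism of $\mathbb{Q}(\zeta_p)$ with $\sigma(\zeta_p)=\zeta_p^r$. Let $\mathbb{K}=\{y\in\mathbb{Q}(\zeta_p):\sigma^n(y)=y\}$ (totally real of degree $n$, embeddings into $\mathbb{R}$ given by the restrictions of $\sigma^0,\dots,\sigma^{n-1}$). Let $\alpha=\prod_{j=0}^{(p-3)/2}(1-\zeta_p^{r^j})$, let $\lambda$ be an integer with $\lambda(r-1)\equiv1\pmod p$, $z=\zeta_p^{\lambda}\alpha(1-\zeta_p)$, and $x=\mathrm{Tr}_{\mathbb{Q}(\zeta_p)/\mathbb{K}}(z)=\sum_{j=1}^{(p-1)/n}\sigma^{jn}(z)$. For a totally positive $\beta\in\mathbb{K}$ define $\varphi_\beta:\mathbb{K}\to\mathbb{R}^n$, $\varphi_\beta(y)=(\sqrt{\sigma^0(\beta)}\sigma^0(y),\dots,\sqrt{\sigma^{n-1}(\beta)}\sigma^{n-1}(y))$. Let $M$ be the $\mathbb{Z}$-module generated by $x+\sigma(x),\ x-\sigma(x),\ \sigma(x)-\sigma^2(x),\dots,\sigma^{n-2}(x)-\sigma^{n-1}(x)$. $D_n=\{(y_1,\dots,y_n)\in\mathbb{Z}^n: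 y_1+\dots+y_n \text{ even}\}$. *)

theory Defs
  imports "HOL-Analysis.Analysis" "HOL-Number_Theory.Number_Theory"
begin

definition zeta :: "nat \<Rightarrow> complex" where
  "zeta p = exp (2 * pi * \<i> / of_nat p)"

text \<open>The element z = zeta^lam * alpha * (1 - zeta), written as a function Zf p r lam w of the
  root w = zeta, so that its image under sigma^m (which sends zeta to zeta^(r^m)) is
  Zf p r lam (zeta p ^ (r ^ m)).\<close>
definition Zf :: "nat \<Rightarrow> nat \<Rightarrow> int \<Rightarrow> complex \<Rightarrow> complex" where
  "Zf p r lam w = (w powi lam) * (\<Prod>j\<in>{0..(p - 3) div 2}. (1 - w ^ (r ^ j))) * (1 - w)"

definition sig_z :: "nat \<Rightarrow> nat \<Rightarrow> int \<Rightarrow> nat \<Rightarrow> complex" where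
  "sig_z p r lam m = Zf p r lam (zeta p ^ (r ^ m))"

definition sig_x :: "nat \<Rightarrow> nat \<Rightarrow> nat \<Rightarrow> int \<Rightarrow> nat \<Rightarrow> complex" where
  "sig_x n p r lam m = (\<Sum>j\<in>{1..(p - 1) div n}. sig_z p r lam (j * n + m))"

definition sig_gen :: "nat \<Rightarrow> nat \<Rightarrow> nat \<Rightarrow> int \<Rightarrow> nat \<Rightarrow> nat \<Rightarrow> complex" where
  "sig_gen n p r lam i m =
     (if i = 0 then sig_x n p r lam m + sig_x n p r lam (m + 1)
      else sig_x n p r lam (i - 1 + m) - sig_x n p r lam (i + m))"

text \<open>phi_beta(M) for beta = 1/p^2 (a rational, fixed by all sigma^m), as a set of
  vectors nat => complex supported on {0..<n}; component m is sqrt(sigma^m beta) * sigma^m(y).\<close>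
definition phiM :: "nat \<Rightarrow> nat \<Rightarrow> nat \<Rightarrow> int \<Rightarrow> (nat \<Rightarrow> complex) set" where
  "phiM n p r lam =
     {(\<lambda>m. if m < n then complex_of_real (sqrt (1 / (real p)^2)) *
                        (\<Sum>i<n. of_int (c i) * sig_gen n p r lam i m) else 0) | c :: nat \<Rightarrow> int. True}"

end

theory Submission
  imports Defs "HOL-Computational_Algebra.Fundamental_Theorem_Algebra"
begin

text \<open>Write zeta^a for e^(2 pi i a/p) and h = (p - 1)/2. Since r^h = -1 (mod p), the conjugates of
  alpha satisfy sigma(alpha) = -zeta^(-1) alpha, and the choice of lam makes
  sigma^m(z) = (-1)^m u (1 - zeta^(r^m)) for the single number u = zeta^lam alpha. Summing over
  the (p - 1)/n conjugates under sigma^n, an even number, gives sigma^m(x) = -u G(m) with the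
  twisted Gaussian period G(m) = sum_s (-1)^(sn+m) zeta^(r^(sn+m)). Now u^2 = (-1)^h p and
  cnj G = (-1)^h G, so every sigma^m(x) is real, and orthogonality of additive characters over
  the powers of r turns the Gram matrix sum_k sigma^(i+k)(x) sigma^(j+k)(x) into p^2 times the
  identity. Hence the vectors Q_i = (sigma^(i+k)(x)/p)_k are orthonormal; in this basis the
  generators of M, scaled by 1/p, have the coordinates e_0 + e_1 and e_(i-1) - e_i, which form
  a basis of D_n.\<close>

section \<open>Roots of unity\<close>

definition root_unity :: "nat \<Rightarrow> int \<Rightarrow> complex" where
  "root_unity q a = exp (2 * pi * \<i> * of_int a / of_nat q)"

lemma root_unity_add: "root_unity q (a + b) = root_unity q a * root_unity q b"
  unfolding root_unity_def by (simp add: exp_add[symmetric] add_divide_distrib distrib_left distrib_right)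

lemma root_unity_0 [simp]: "root_unity q 0 = 1"
  unfolding root_unity_def by simp

lemma root_unity_minus_mult: "root_unity q (- a) * root_unity q a = 1"
  using root_unity_add[of q "- a" a] by simp

lemma root_unity_power: "root_unity q a ^ k = root_unity q (int k * a)"
  unfolding root_unity_def by (simp add: exp_of_nat_mult[symmetric] mult_ac)

lemma root_unity_power_int: "root_unity q a powi l = root_unity q (l * a)"
  unfolding root_unity_def by (simp add: exp_power_int mult_ac)

lemma cnj_root_unity: "cnj (root_unity q a) = root_unity q (- a)"
  unfolding root_unity_def by (simp add: exp_cnj)

lemma zeta_power: "zeta q ^ k = root_unity q (int k)"
  unfolding zeta_def root_unity_def by (simp add: exp_of_nat_mult[symmetric] mult_ac)

context
  fixes q :: nat
  assumes q_pos: "q > 0"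
begin

lemma root_unity_multiple: "root_unity q (int q * k) = 1"
proof -
  have "root_unity q (int q * k) = exp (2 * pi * \<i>) powi k"
    unfolding root_unity_def exp_power_int using q_pos by (simp add: field_simps)
  then show ?thesis by simp
qed

lemma root_unity_cong:
  assumes "[a = b] (mod int q)"
  shows "root_unity q a = root_unity q b"
proof -
  obtain k where "a = b + int q * k"
    using assms by (metis cong_iff_lin cong_sym)
  then show ?thesis by (simp add: root_unity_add root_unity_multiple)
qed

lemma root_unity_eq_1_iff: "root_unity q a = 1 \<longleftrightarrow> int q dvd a"
proof
  assume "root_unity q a = 1"
  then obtain k :: int where "Im (2 * pi * \<i> * of_int a / of_nat q) = of_int (2 * k) * pi"
    unfolding root_unity_def exp_eq_1 by blast
  then have "real_of_int a = real q * of_int k" using q_pos by (simp add: field_simps)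
  then have "a = int q * k" by (metis of_int_eq_iff of_int_mult of_int_of_nat_eq)
  then show "int q dvd a" by simp
qed (auto simp: root_unity_multiple)

lemma root_unity_mod: "root_unity q (int (a mod q) * b) = root_unity q (int a * b)"
  by (rule root_unity_cong) (simp add: cong_def mod_mult_left_eq of_nat_mod)

lemma inj_on_root_unity: "inj_on (\<lambda>a. root_unity q (int a)) {..<q}"
proof (rule inj_onI)
  fix a b assume ab: "a \<in> {..<q}" "b \<in> {..<q}" "root_unity q (int a) = root_unity q (int b)"
  have "root_unity q (int a - int b) = 1"
    using ab(3) root_unity_add[of q "int a" "- int b"] root_unity_minus_mult[of q "int b"]
    by (simp add: mult.commute)
  then have "int q dvd int a - int b" using root_unity_eq_1_iff by blast
  then show "a = b" using ab(1,2)
    by (smt (verit, best) dvd_minus_iff lessThan_iff of_nat_0_le_iff of_nat_eq_iff of_nat_less_iff zdvd_not_zless)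
qed

lemma roots_unity_eq_image: "{z :: complex. z ^ q = 1} = (\<lambda>a. root_unity q (int a)) ` {..<q}"
proof -
  have "{z :: complex. z ^ q = 1} = {exp (2 * of_real pi * \<i> * of_nat j / of_nat q) | j. j < q}"
    using q_pos by (intro complex_roots_unity) simp
  then show ?thesis unfolding root_unity_def by auto
qed

lemma monom_minus_1_eq_prod_roots_unity:
  "Polynomial.monom (1 :: complex) q - 1 = (\<Prod>z | z ^ q = 1. [:- z, 1:])"
proof -
  let ?P = "Polynomial.monom (1 :: complex) q - 1"
  have roots: "poly ?P z = 0 \<longleftrightarrow> z ^ q = 1" for z by (simp add: poly_monom)
  have squarefree: "rsquarefree ?P"
    unfolding rsquarefree_roots
  proof (intro allI notI)
    fix a assume "poly ?P a = 0 \<and> poly (pderiv ?P) a = 0"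
    then have "a ^ q = 1" and "of_nat q * a ^ (q - 1) = 0"
      using roots by (auto simp: pderiv_diff pderiv_monom poly_monom)
    then show False using q_pos by (cases "a = 0") (auto simp: power_0_left)
  qed
  have lead: "lead_coeff ?P = 1"
    using q_pos by (metis degree_1 degree_minus degree_monom_eq lead_coeff_add_le lead_coeff_monom
      uminus_add_conv_diff zero_neq_one)
  from complex_poly_decompose_rsquarefree[OF squarefree] show ?thesis
    using lead roots by simp
qed

lemma prod_one_minus_root_unity: "(\<Prod>a\<in>{0<..<q}. 1 - root_unity q (int a)) = of_nat q"
proof -
  let ?R = "\<Prod>a\<in>{0<..<q}. [:- root_unity q (int a), 1:]"
  let ?S = "\<Sum>k<q. Polynomial.monom (1 :: complex) k"
  have "{..<q} = insert 0 {0<..<q}" using q_pos by auto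
  then have R: "Polynomial.monom (1 :: complex) q - 1 = [:-1, 1:] * ?R"
    using monom_minus_1_eq_prod_roots_unity roots_unity_eq_image
      prod.reindex[OF inj_on_root_unity, of "\<lambda>z. [:- z, 1:]"] by simp
  have S: "Polynomial.monom (1 :: complex) q - 1 = [:-1, 1:] * ?S"
    by (rule poly_eq_poly_eq_iff[THEN iffD1], rule ext)
      (simp add: poly_monom poly_sum power_diff_1_eq algebra_simps)
  have "[:-1, 1:] * ?R = [:-1, 1:] * ?S" using R S by (rule trans[OF sym])
  then have "?R = ?S" by (subst (asm) mult_left_cancel) simp_all
  then have "poly ?R 1 = poly ?S 1" by simp
  then show ?thesis by (simp add: poly_prod poly_sum poly_monom)
qed

lemma sum_root_unity: "(\<Sum>a<q. root_unity q (int a * b)) = (if int q dvd b then of_nat q else 0)"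
proof (cases "int q dvd b")
  case True
  then have "root_unity q (int a * b) = 1" for a by (simp add: root_unity_eq_1_iff)
  then show ?thesis using True by simp
next
  case False
  then have "root_unity q b \<noteq> 1" using root_unity_eq_1_iff by simp
  then have "(\<Sum>a<q. root_unity q b ^ a) = (root_unity q b ^ q - 1) / (root_unity q b - 1)"
    by (simp add: geometric_sum)
  then show ?thesis using False by (simp add: root_unity_power root_unity_multiple)
qed

end

lemma sum_neg_one_power_even:
  assumes "even t"
  shows "(\<Sum>j<t. (-1 :: 'a :: ring_1) ^ j) = 0"
proof -
  obtain k where "t = 2 * k" using assms by blast
  moreover have "(\<Sum>j<2 * k. (-1 :: 'a) ^ j) = 0" by (induction k) (auto simp: mult_2)
  ultimately show ?thesis by simp
qed

lemma sum_neg_one_power_progression: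
  assumes "odd n" and "even t"
  shows "(\<Sum>s<t. (-1 :: 'a :: comm_ring_1) ^ (s * n + d)) = 0"
proof -
  have "(-1 :: 'a) ^ (s * n + d) = (-1) ^ d * (-1) ^ s" for s
    using assms(1) by (simp add: power_add power_mult mult.commute[of s])
  then have "(\<Sum>s<t. (-1 :: 'a) ^ (s * n + d)) = (-1) ^ d * (\<Sum>s<t. (-1) ^ s)"
    by (simp add: sum_distrib_left)
  then show ?thesis using sum_neg_one_power_even[OF assms(2), where 'a = 'a] by simp
qed

lemma sum_lessThan_mult_blocks:
  fixes H :: "nat \<Rightarrow> 'a :: comm_monoid_add"
  shows "(\<Sum>e<t * n. H e) = (\<Sum>s<t. \<Sum>k<n. H (s * n + k))"
proof -
  have "sum H {s * n..<s * n + n} = (\<Sum>k<n. H (s * n + k))" for s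
    using sum.shift_bounds_nat_ivl[of H 0 "s * n" n] by (simp add: atLeast0LessThan add.commute)
  then show ?thesis using sum.nat_group[of H n t] by simp
qed

lemma sum_lessThan_periodic_shift:
  fixes \<Phi> :: "nat \<Rightarrow> 'a :: cancel_comm_monoid_add"
  assumes periodic: "\<And>x. \<Phi> (x + M) = \<Phi> x"
  shows "(\<Sum>e<M. \<Phi> (e + i)) = (\<Sum>e<M. \<Phi> e)"
proof (induction i)
  case (Suc i)
  have "\<Phi> i + (\<Sum>e<M. \<Phi> (e + Suc i)) = (\<Sum>e<Suc M. \<Phi> (e + i))"
    by (subst sum.lessThan_Suc_shift) simp
  also have "\<dots> = (\<Sum>e<M. \<Phi> (e + i)) + \<Phi> i"
    using periodic[of i] by (simp add: add.commute)
  finally show ?case using Suc.IH by (simp add: add.commute)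
qed simp

section \<open>The lattice D_n\<close>

text \<open>Rows e_0 + e_1 and e_(i-1) - e_i (0 < i < n): the coordinates of the generators
  x + sigma(x) and sigma^(i-1)(x) - sigma^i(x) of M.\<close>
definition Dn_basis :: "nat \<Rightarrow> nat \<Rightarrow> int" where
  "Dn_basis i l =
     (if i = 0 then of_bool (l = 0) + of_bool (l = 1) else of_bool (l + 1 = i) - of_bool (l = i))"

lemma sum_Dn_basis_row:
  fixes v :: "nat \<Rightarrow> 'a :: ring_1"
  assumes "i < n" and "2 \<le> n"
  shows "(\<Sum>l<n. of_int (Dn_basis i l) * v l) = (if i = 0 then v 0 + v 1 else v (i - 1) - v i)"
proof (cases "i = 0")
  case True
  then have "(\<Sum>l<n. of_int (Dn_basis i l) * v l)
      = (\<Sum>l<n. (if l = 0 then v l else 0) + (if l = 1 then v l else 0))"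
    by (intro sum.cong refl) (auto simp: Dn_basis_def)
  also have "\<dots> = (\<Sum>l<n. if l = 0 then v l else 0) + (\<Sum>l<n. if l = 1 then v l else 0)"
    by (rule sum.distrib)
  finally show ?thesis using True assms(2) by simp
next
  case False
  then have "(\<Sum>l<n. of_int (Dn_basis i l) * v l)
      = (\<Sum>l<n. (if l = i - 1 then v l else 0) - (if l = i then v l else 0))"
    by (intro sum.cong refl) (auto simp: Dn_basis_def)
  also have "\<dots> = (\<Sum>l<n. if l = i - 1 then v l else 0) - (\<Sum>l<n. if l = i then v l else 0)"
    by (rule sum_subtractf)
  finally show ?thesis using False assms(1) by (simp add: less_imp_diff_less)
qed

lemma sum_Dn_basis_column:
  assumes "l < n"
  shows "(\<Sum>i<n. c i * Dn_basis i l) = c 0 * (of_bool (l = 0) + of_bool (l = 1)) +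
     (if l + 1 < n then c (l + 1) else 0) - (if 1 \<le> l then c l else 0)"
proof -
  have "{..<n} = insert 0 {1..<n}" using assms by auto
  then have "(\<Sum>i<n. c i * Dn_basis i l) = c 0 * Dn_basis 0 l + (\<Sum>i\<in>{1..<n}. c i * Dn_basis i l)"
    by simp
  also have "(\<Sum>i\<in>{1..<n}. c i * Dn_basis i l)
      = (\<Sum>i\<in>{1..<n}. (if i = l + 1 then c i else 0) - (if i = l then c i else 0))"
    by (intro sum.cong refl) (auto simp: Dn_basis_def)
  also have "\<dots> = (\<Sum>i\<in>{1..<n}. if i = l + 1 then c i else 0) - (\<Sum>i\<in>{1..<n}. if i = l then c i else 0)"
    by (rule sum_subtractf)
  finally show ?thesis using assms by (simp add: Dn_basis_def sum.delta')
qed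

lemma Dn_basis_combination_imp_even:
  assumes "2 \<le> n"
  shows "even (\<Sum>l<n. \<Sum>i<n. c i * Dn_basis i l)"
proof -
  have row_sum: "(\<Sum>l<n. Dn_basis i l) = (if i = 0 then 2 else 0)" if "i < n" for i
    using sum_Dn_basis_row[OF that assms, of "\<lambda>_. 1 :: int"] by simp
  have "(\<Sum>l<n. \<Sum>i<n. c i * Dn_basis i l) = (\<Sum>i<n. c i * (\<Sum>l<n. Dn_basis i l))"
    by (subst sum.swap) (simp add: sum_distrib_left)
  also have "\<dots> = (\<Sum>i<n. if i = 0 then 2 * c i else 0)"
    by (intro sum.cong refl) (simp add: row_sum)
  also have "\<dots> = 2 * c 0" using assms by (simp add: sum.delta)
  finally show ?thesis by simp
qed

text \<open>The coefficients are c_0 = S/2, c_1 = d_0 - S/2 and c_i = -(d_i + ... + d_(n-1)) for i >= 2,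
  where S is the sum of all d_l.\<close>
lemma even_imp_Dn_basis_combination:
  assumes "2 \<le> n" and "even (\<Sum>l<n. d l)"
  shows "\<exists>c. \<forall>l<n. (\<Sum>i<n. c i * Dn_basis i l) = d l"
proof -
  define T where "T i = (\<Sum>m\<in>{i..<n}. d m)" for i
  define c where "c i = (if i = 0 then T 0 div 2 else if i = 1 then d 0 - T 0 div 2 else - T i)" for i
  have T_step: "T l = d l + T (Suc l)" if "l < n" for l
    unfolding T_def using that by (simp add: sum.atLeast_Suc_lessThan)
  have T_0: "T 0 = d 0 + d 1 + T 2"
    using T_step[of 0] T_step[of 1] assms(1) by (simp add: numeral_2_eq_2)
  have T_0_even: "2 * (T 0 div 2) = T 0"
    using assms(2) by (simp add: T_def atLeast0LessThan)
  have c_next: "(if l + 1 < n then c (l + 1) else 0) = - T (l + 1)" if "1 \<le> l" "l < n" for l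
    using that by (auto simp: c_def T_def)
  have "(\<Sum>i<n. c i * Dn_basis i l) = d l" if l: "l < n" for l
  proof -
    consider "l = 0" | "l = 1" | "l \<ge> 2" by linarith
    then show ?thesis
    proof cases
      case 1
      then show ?thesis using sum_Dn_basis_column[OF l, of c] assms(1) by (simp add: c_def)
    next
      case 2
      then have "(\<Sum>i<n. c i * Dn_basis i l) = c 0 - T 2 - c 1"
        using sum_Dn_basis_column[OF l, of c] c_next[OF _ l] by (simp add: numeral_2_eq_2)
      then show ?thesis using T_0 T_0_even 2 by (simp add: c_def)
    next
      case 3
      then have "(\<Sum>i<n. c i * Dn_basis i l) = - T (l + 1) - c l"
        using sum_Dn_basis_column[OF l, of c] c_next[OF _ l] by simp
      then show ?thesis using 3 T_step[OF l] by (simp add: c_def)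
    qed
  qed
  then show ?thesis by blast
qed

lemma Dn_basis_combination_iff:
  assumes "2 \<le> n"
  shows "(\<exists>c. \<forall>l<n. (\<Sum>i<n. c i * Dn_basis i l) = d l) \<longleftrightarrow> even (\<Sum>l<n. d l)"
proof
  assume "\<exists>c. \<forall>l<n. (\<Sum>i<n. c i * Dn_basis i l) = d l"
  then obtain c where "\<forall>l<n. (\<Sum>i<n. c i * Dn_basis i l) = d l" by blast
  then have "(\<Sum>l<n. d l) = (\<Sum>l<n. \<Sum>i<n. c i * Dn_basis i l)" by simp
  then show "even (\<Sum>l<n. d l)" using Dn_basis_combination_imp_even[OF assms] by simp
qed (rule even_imp_Dn_basis_combination[OF assms])

section \<open>Powers of a primitive root\<close>

locale primroot_mod_prime =
  fixes p r :: nat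
  assumes prime: "prime p" and p_gt_2: "p > 2" and ord_r: "ord p r = p - 1"
begin

definition h :: nat where "h = (p - 1) div 2"

lemma p_minus_1_eq: "p - 1 = 2 * h"
proof -
  have "odd p" using prime p_gt_2 prime_odd_nat by simp
  then show ?thesis unfolding h_def by simp
qed

lemma coprime_p_r: "coprime p r"
  using ord_r p_gt_2 by (metis less_diff_conv not_one_less_zero one_add_one ord_eq_0)

lemma bij_betw_power_mod: "bij_betw (\<lambda>i. r ^ i mod p) {..<p - 1} {0<..<p}"
proof -
  have "residue_primroot p r"
    unfolding residue_primroot_def using coprime_p_r ord_r p_gt_2 totient_prime[OF prime] by auto
  from residue_primroot_is_generator[OF _ this] p_gt_2 show ?thesis
    using totient_prime[OF prime] totatives_prime[OF prime] by auto
qed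

lemma sum_root_unity_powers:
  "(\<Sum>i<p - 1. root_unity p (int r ^ i * b)) = (if int p dvd b then of_nat p - 1 else - 1)"
proof -
  have "(\<Sum>i<p - 1. root_unity p (int r ^ i * b)) = (\<Sum>i<p - 1. root_unity p (int (r ^ i mod p) * b))"
    using p_gt_2 by (simp add: root_unity_mod)
  also have "\<dots> = (\<Sum>a\<in>{0<..<p}. root_unity p (int a * b))"
    by (rule sum.reindex_bij_betw[OF bij_betw_power_mod])
  also have "\<dots> = (\<Sum>a<p. root_unity p (int a * b)) - 1"
  proof -
    have "{..<p} = insert 0 {0<..<p}" using p_gt_2 by auto
    then show ?thesis by simp
  qed
  finally show ?thesis using p_gt_2 by (simp add: sum_root_unity)
qed

lemma prod_one_minus_root_unity_powers: "(\<Prod>i<p - 1. 1 - root_unity p (int r ^ i)) = of_nat p"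
proof -
  have "(\<Prod>i<p - 1. 1 - root_unity p (int r ^ i)) = (\<Prod>i<p - 1. 1 - root_unity p (int (r ^ i mod p)))"
    using p_gt_2 root_unity_mod[of p _ 1] by simp
  also have "\<dots> = (\<Prod>a\<in>{0<..<p}. 1 - root_unity p (int a))"
    by (rule prod.reindex_bij_betw[OF bij_betw_power_mod])
  finally show ?thesis using p_gt_2 by (simp add: prod_one_minus_root_unity)
qed

lemma power_cong_iff: "[int r ^ a = int r ^ b] (mod int p) \<longleftrightarrow> [a = b] (mod p - 1)"
proof -
  have "[int r ^ a = int r ^ b] (mod int p) \<longleftrightarrow> [r ^ a = r ^ b] (mod p)"
    using cong_int_iff[of "r ^ a" "r ^ b" p] by simp
  also have "\<dots> \<longleftrightarrow> [a = b] (mod ord p r)" by (rule order_divides_expdiff[OF coprime_p_r])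
  finally show ?thesis using ord_r by simp
qed

lemma power_half_cong: "[int r ^ h = -1] (mod int p)"
proof -
  have "[int r ^ (p - 1) = int r ^ 0] (mod int p)" using power_cong_iff[of "p - 1" 0] by (simp add: cong_def)
  then have "int p dvd int r ^ (p - 1) - 1" by (simp add: cong_iff_dvd_diff)
  also have "int r ^ (p - 1) - 1 = (int r ^ h - 1) * (int r ^ h + 1)"
    unfolding p_minus_1_eq mult_2 power_add by (simp add: algebra_simps)
  finally have "int p dvd int r ^ h - 1 \<or> int p dvd int r ^ h + 1"
    using prime by (simp add: prime_dvd_mult_eq_int)
  moreover have "\<not> [int r ^ h = int r ^ 0] (mod int p)"
  proof -
    have "0 < h" "h < p - 1" using p_minus_1_eq p_gt_2 by auto
    then show ?thesis unfolding power_cong_iff by (simp add: cong_def)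
  qed
  ultimately show ?thesis by (simp add: cong_iff_dvd_diff)
qed

lemma dvd_one_plus_power_iff: "int p dvd 1 + int r ^ c \<longleftrightarrow> [c = h] (mod p - 1)"
proof -
  have "int p dvd 1 + int r ^ c \<longleftrightarrow> [int r ^ c = -1] (mod int p)"
    using cong_iff_dvd_diff[of "int r ^ c" "-1" "int p"] by (simp add: add.commute)
  also have "\<dots> \<longleftrightarrow> [int r ^ c = int r ^ h] (mod int p)"
  proof
    assume "[int r ^ c = -1] (mod int p)"
    then show "[int r ^ c = int r ^ h] (mod int p)" using cong_sym[OF power_half_cong] by (rule cong_trans)
  next
    assume "[int r ^ c = int r ^ h] (mod int p)"
    then show "[int r ^ c = -1] (mod int p)" using power_half_cong by (rule cong_trans)
  qed
  finally show ?thesis by (simp add: power_cong_iff)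
qed

lemma root_unity_power_add_half: "root_unity p (int r ^ (m + h)) = root_unity p (- (int r ^ m))"
proof (rule root_unity_cong)
  show "p > 0" using p_gt_2 by simp
  have "[int r ^ m * int r ^ h = int r ^ m * (-1)] (mod int p)"
    using power_half_cong by (rule cong_scalar_left)
  then show "[int r ^ (m + h) = - (int r ^ m)] (mod int p)" by (simp add: power_add)
qed

lemma root_unity_power_add_p_minus_1:
  "root_unity p (int r ^ (m + (p - 1)) * b) = root_unity p (int r ^ m * b)"
proof (rule root_unity_cong)
  show "p > 0" using p_gt_2 by simp
  have "[int r ^ (p - 1) = int r ^ 0] (mod int p)" using power_cong_iff[of "p - 1" 0] by (simp add: cong_def)
  then have "[int r ^ m * int r ^ (p - 1) * b = int r ^ m * 1 * b] (mod int p)"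
    by (intro cong_mult cong_refl) simp
  then show "[int r ^ (m + (p - 1)) * b = int r ^ m * b] (mod int p)" by (simp add: power_add)
qed

lemma root_unity_power_neq_1: "root_unity p (int r ^ m) \<noteq> 1"
proof
  assume "root_unity p (int r ^ m) = 1"
  moreover have "p > 0" using p_gt_2 by simp
  ultimately have "int p dvd int r ^ m" by (simp only: root_unity_eq_1_iff)
  then have "p dvd r ^ m" by (simp only: of_nat_power[symmetric] int_dvd_int_iff)
  then have "p dvd r" using prime prime_dvd_power by blast
  then have "is_unit p" using coprime_absorb_left coprime_p_r by blast
  then show False using prime by simp
qed

end

section \<open>The conjugates of x\<close>

locale lattice_construction = primroot_mod_prime +
  fixes n :: nat and lam :: int
  assumes n_gt_1: "n > 1" and odd_n: "odd n" and n_dvd: "n dvd p - 1"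
    and lam_cong: "[lam * (int r - 1) = 1] (mod int p)"
begin

definition t :: nat where "t = (p - 1) div n"

lemma p_minus_1_eq_n_t: "p - 1 = n * t"
  using n_dvd unfolding t_def by simp

lemma even_t: "even t"
  using p_minus_1_eq p_minus_1_eq_n_t odd_n by (metis even_mult_iff even_numeral)

lemma h_eq: "h = n * (t div 2)"
  using p_minus_1_eq p_minus_1_eq_n_t even_t by (metis div_mult_swap nonzero_mult_div_cancel_left zero_neq_numeral)

lemma t_pos: "t > 0"
  using p_minus_1_eq_n_t p_gt_2 by (cases t) auto

text \<open>With zeta^a written as root_unity p a: sigma_factor k = sigma^k(1 - zeta),
  alpha_conj m = sigma^m(alpha), u = zeta^lam alpha, signed_conj k = (-1)^k sigma^k(zeta) and
  gauss_period m = G(m).\<close>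

definition sigma_factor :: "nat \<Rightarrow> complex" where
  "sigma_factor k = 1 - root_unity p (int r ^ k)"

definition alpha_conj :: "nat \<Rightarrow> complex" where
  "alpha_conj m = (\<Prod>j<h. sigma_factor (m + j))"

definition u :: complex where
  "u = root_unity p lam * alpha_conj 0"

definition signed_conj :: "nat \<Rightarrow> complex" where
  "signed_conj k = (-1) ^ k * root_unity p (int r ^ k)"

definition gauss_period :: "nat \<Rightarrow> complex" where
  "gauss_period m = (\<Sum>s<t. signed_conj (s * n + m))"

lemma alpha_conj_Suc: "alpha_conj (Suc m) = - root_unity p (- (int r ^ m)) * alpha_conj m"
proof -
  have "sigma_factor (m + h) = - root_unity p (- (int r ^ m)) * sigma_factor m"
    unfolding sigma_factor_def root_unity_power_add_half
    using root_unity_minus_mult[of p "int r ^ m"] by (simp add: algebra_simps)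
  then have "alpha_conj (Suc m) * sigma_factor m
      = (- root_unity p (- (int r ^ m)) * alpha_conj m) * sigma_factor m"
    unfolding alpha_conj_def
    by (simp add: prod.lessThan_Suc_shift[symmetric, of "\<lambda>j. sigma_factor (m + j)", simplified]
        prod.lessThan_Suc mult_ac)
  moreover have "sigma_factor m \<noteq> 0"
    unfolding sigma_factor_def using root_unity_power_neq_1 by simp
  ultimately show ?thesis using mult_right_cancel by blast
qed

lemma root_unity_lam_alpha_conj: "root_unity p (int r ^ m * lam) * alpha_conj m = (-1) ^ m * u"
proof (induction m)
  case 0
  then show ?case by (simp add: u_def)
next
  case (Suc m)
  have "[int r ^ Suc m * lam - (int r ^ m) = int r ^ m * lam] (mod int p)"
  proof -
    have "int p dvd int r ^ m * (lam * (int r - 1) - 1)"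
      using lam_cong cong_iff_dvd_diff by (metis dvd_mult)
    then show ?thesis by (simp add: cong_iff_dvd_diff algebra_simps)
  qed
  then have "root_unity p (int r ^ Suc m * lam) * root_unity p (- (int r ^ m))
      = root_unity p (int r ^ m * lam)"
    using p_gt_2 by (simp add: root_unity_add[symmetric] root_unity_cong)
  then show ?case
    using Suc.IH by (simp add: alpha_conj_Suc) (simp add: algebra_simps)
qed

lemma sig_z_eq: "sig_z p r lam m = (-1) ^ m * u * sigma_factor m"
proof -
  have "{0..(p - 3) div 2} = {..<h}" using p_minus_1_eq p_gt_2 unfolding h_def by auto
  then have "sig_z p r lam m
      = root_unity p (int r ^ m * lam) * (\<Prod>j<h. 1 - root_unity p (int r ^ m) ^ (r ^ j)) * sigma_factor m"
    unfolding sig_z_def Zf_def zeta_power sigma_factor_def by (simp add: root_unity_power_int mult.commute)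
  also have "(\<Prod>j<h. 1 - root_unity p (int r ^ m) ^ (r ^ j)) = alpha_conj m"
    unfolding alpha_conj_def sigma_factor_def
    by (intro prod.cong refl) (simp add: root_unity_power power_add mult.commute)
  finally show ?thesis by (simp only: root_unity_lam_alpha_conj)
qed

lemma signed_conj_add_p_minus_1: "signed_conj (k + (p - 1)) = signed_conj k"
  unfolding signed_conj_def
  using root_unity_power_add_p_minus_1[of k 1] p_minus_1_eq by (simp add: power_add)

lemma gauss_period_add_n: "gauss_period (m + n) = gauss_period m"
proof -
  have "signed_conj m + gauss_period (m + n) = (\<Sum>s<Suc t. signed_conj (s * n + m))"
    unfolding gauss_period_def by (subst sum.lessThan_Suc_shift) (simp add: algebra_simps)
  also have "\<dots> = gauss_period m + signed_conj m"
    using signed_conj_add_p_minus_1[of m] p_minus_1_eq_n_t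
    by (simp add: gauss_period_def add.commute mult.commute)
  finally show ?thesis by (simp add: add.commute)
qed

lemma gauss_period_add_mult_n: "gauss_period (m + n * k) = gauss_period m"
proof (induction k)
  case (Suc k)
  then show ?case using gauss_period_add_n[of "m + n * k"] by (simp add: algebra_simps)
qed simp

lemma gauss_period_add_p_minus_1: "gauss_period (m + (p - 1)) = gauss_period m"
  using gauss_period_add_mult_n p_minus_1_eq_n_t by metis

lemma sig_x_eq: "sig_x n p r lam m = - u * gauss_period m"
proof -
  have "sig_x n p r lam m = (\<Sum>s<t. (-1) ^ (s * n + (n + m)) * u * sigma_factor (s * n + (n + m)))"
    unfolding sig_x_def t_def[symmetric] sig_z_eq by (simp add: sum.atLeast1_atMost_eq algebra_simps)
  also have "\<dots> = u * (\<Sum>s<t. (-1) ^ (s * n + (n + m))) - u * gauss_period (m + n)"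
    unfolding sigma_factor_def signed_conj_def gauss_period_def
    by (simp add: sum_distrib_left sum_subtractf algebra_simps)
  finally show ?thesis
    using sum_neg_one_power_progression[OF odd_n even_t, where 'a = complex] gauss_period_add_n by simp
qed

lemma neg_one_power_mult_self: "(-1 :: complex) ^ a * (-1) ^ a = 1"
  by (simp flip: power_add)

lemma cnj_signed_conj: "cnj (signed_conj k) = (-1) ^ h * signed_conj (k + h)"
proof -
  have "(-1 :: complex) ^ k = (-1) ^ h * (-1) ^ (k + h)"
    using neg_one_power_mult_self[of h] by (simp add: power_add mult_ac)
  then show ?thesis
    unfolding signed_conj_def by (simp add: cnj_root_unity root_unity_power_add_half mult.assoc)
qed

lemma cnj_gauss_period: "cnj (gauss_period m) = (-1) ^ h * gauss_period m"
proof -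
  have "cnj (gauss_period m) = (-1) ^ h * gauss_period (m + h)"
    unfolding gauss_period_def by (simp add: cnj_signed_conj sum_distrib_left add.assoc)
  then show ?thesis using gauss_period_add_mult_n[of m "t div 2"] h_eq by simp
qed

lemma cnj_u_eq_alpha_conj: "cnj u = root_unity p (- lam) * alpha_conj h"
proof -
  have "cnj (alpha_conj 0) = alpha_conj h"
    unfolding alpha_conj_def sigma_factor_def
    by (simp add: cnj_root_unity root_unity_power_add_half add.commute)
  then show ?thesis unfolding u_def by (simp only: complex_cnj_mult cnj_root_unity)
qed

lemma cnj_u: "cnj u = (-1) ^ h * u"
proof -
  have "[int r ^ h * lam = - lam] (mod int p)"
    using cong_scalar_right[OF power_half_cong, of lam] by simp
  then have "root_unity p (- lam) = root_unity p (int r ^ h * lam)"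
    using p_gt_2 by (simp add: root_unity_cong cong_sym)
  then show ?thesis using cnj_u_eq_alpha_conj root_unity_lam_alpha_conj[of h] by simp
qed

lemma u_mult_cnj_u: "u * cnj u = of_nat p"
proof -
  have "u * cnj u = (root_unity p (- lam) * root_unity p lam) * (alpha_conj 0 * alpha_conj h)"
    unfolding cnj_u_eq_alpha_conj by (simp add: u_def mult_ac)
  also have "alpha_conj 0 * alpha_conj h = (\<Prod>j<p - 1. sigma_factor j)"
    using prod.atLeastLessThan_concat[of 0 h "h + h" sigma_factor]
      prod.shift_bounds_nat_ivl[of sigma_factor 0 h h]
    unfolding p_minus_1_eq mult_2 by (simp add: alpha_conj_def atLeast0LessThan add.commute)
  finally show ?thesis
    using prod_one_minus_root_unity_powers unfolding sigma_factor_def by (simp add: root_unity_minus_mult)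
qed

lemma u_square: "u * u = (-1) ^ h * of_nat p"
proof -
  have "(-1) ^ h * (u * u) = of_nat p" using u_mult_cnj_u by (simp add: cnj_u mult_ac)
  then show ?thesis using neg_one_power_mult_self[of h] by (metis mult.assoc mult_1)
qed

lemma cnj_sig_x: "cnj (sig_x n p r lam m) = sig_x n p r lam m"
  using neg_one_power_mult_self[of h] by (simp add: sig_x_eq cnj_u cnj_gauss_period mult_ac)

section \<open>The Gram matrix of the conjugates of x\<close>

lemma signed_conj_autocorrelation:
  "(\<Sum>a<p - 1. signed_conj a * signed_conj (a + c))
     = (-1) ^ c * ((if [c = h] (mod p - 1) then of_nat p else 0) - 1)"
proof -
  have "signed_conj a * signed_conj (a + c) = (-1) ^ c * root_unity p (int r ^ a * (1 + int r ^ c))" for a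
  proof -
    have "signed_conj a * signed_conj (a + c)
        = ((-1) ^ a * (-1) ^ a) * (-1) ^ c * (root_unity p (int r ^ a) * root_unity p (int r ^ a * int r ^ c))"
      unfolding signed_conj_def by (simp add: power_add mult_ac)
    then show ?thesis
      using neg_one_power_mult_self[of a] by (simp add: root_unity_add[symmetric] algebra_simps)
  qed
  then have "(\<Sum>a<p - 1. signed_conj a * signed_conj (a + c))
      = (-1) ^ c * (\<Sum>a<p - 1. root_unity p (int r ^ a * (1 + int r ^ c)))"
    by (simp add: sum_distrib_left)
  then show ?thesis
    using sum_root_unity_powers[of "1 + int r ^ c"] dvd_one_plus_power_iff[of c] by simp
qed

lemma signed_conj_gauss_period_correlation:
  "(\<Sum>a<p - 1. signed_conj a * gauss_period (a + d))
     = (\<Sum>s<t. if [s * n + d = h] (mod p - 1) then (-1) ^ (s * n + d) * of_nat p else 0)"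
proof -
  have "(\<Sum>a<p - 1. signed_conj a * gauss_period (a + d))
      = (\<Sum>s<t. \<Sum>a<p - 1. signed_conj a * signed_conj (a + (s * n + d)))"
    unfolding gauss_period_def sum_distrib_left by (subst sum.swap) (simp add: algebra_simps)
  also have "\<dots> = (\<Sum>s<t. (-1) ^ (s * n + d) * ((if [s * n + d = h] (mod p - 1) then of_nat p else 0) - 1))"
    by (simp only: signed_conj_autocorrelation)
  also have "\<dots> = (\<Sum>s<t. if [s * n + d = h] (mod p - 1) then (-1) ^ (s * n + d) * of_nat p else 0)
      - (\<Sum>s<t. (-1) ^ (s * n + d))"
  proof -
    have "(-1 :: complex) ^ c * ((if C then of_nat p else 0) - 1) = (if C then (-1) ^ c * of_nat p else 0) - (-1) ^ c"
      for c C by (cases C) (simp_all add: algebra_simps)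
    then show ?thesis by (simp only: sum_subtractf)
  qed
  finally show ?thesis
    using sum_neg_one_power_progression[OF odd_n even_t, where 'a = complex] by simp
qed

lemma gauss_period_correlation_eq_signed:
  assumes "i \<le> p - 1"
  shows "(\<Sum>k<n. gauss_period (i + k) * gauss_period (j + k))
     = (\<Sum>a<p - 1. signed_conj a * gauss_period (a + (j + (p - 1) - i)))"
proof -
  have "(\<Sum>a<p - 1. signed_conj (a + i) * gauss_period (a + j))
      = (\<Sum>s<t. \<Sum>k<n. signed_conj (s * n + (i + k)) * gauss_period (j + k))"
  proof -
    have "gauss_period (s * n + k + j) = gauss_period (j + k)" for s k
      using gauss_period_add_mult_n[of "j + k" s] by (simp add: algebra_simps)
    then show ?thesis
      unfolding p_minus_1_eq_n_t mult.commute[of n t] sum_lessThan_mult_blocks by (simp add: algebra_simps)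
  qed
  also have "\<dots> = (\<Sum>k<n. gauss_period (i + k) * gauss_period (j + k))"
    unfolding gauss_period_def by (subst sum.swap) (simp add: sum_distrib_right)
  finally have "(\<Sum>k<n. gauss_period (i + k) * gauss_period (j + k))
      = (\<Sum>a<p - 1. signed_conj (a + i) * gauss_period (a + j))" ..
  also have "\<dots> = (\<Sum>a<p - 1. signed_conj (a + i) * gauss_period (a + i + (j + (p - 1) - i)))"
  proof (intro sum.cong refl)
    fix a
    have "a + i + (j + (p - 1) - i) = (a + j) + (p - 1)" using assms by simp
    then show "signed_conj (a + i) * gauss_period (a + j)
        = signed_conj (a + i) * gauss_period (a + i + (j + (p - 1) - i))"
      by (simp only: gauss_period_add_p_minus_1)
  qed
  also have "\<dots> = (\<Sum>a<p - 1. signed_conj a * gauss_period (a + (j + (p - 1) - i)))"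
  proof (rule sum_lessThan_periodic_shift[where \<Phi> = "\<lambda>a. signed_conj a * gauss_period (a + (j + (p - 1) - i))"])
    fix x
    have "x + (p - 1) + (j + (p - 1) - i) = x + (j + (p - 1) - i) + (p - 1)" by simp
    then show "signed_conj (x + (p - 1)) * gauss_period (x + (p - 1) + (j + (p - 1) - i))
        = signed_conj x * gauss_period (x + (j + (p - 1) - i))"
      by (simp only: signed_conj_add_p_minus_1 gauss_period_add_p_minus_1)
  qed
  finally show ?thesis .
qed

lemma cong_shift_half_iff:
  assumes "s < t"
  shows "[s * n + (p - 1) = h] (mod p - 1) \<longleftrightarrow> s = t div 2"
proof -
  have "s * n < p - 1" using assms p_minus_1_eq_n_t n_gt_1 by simp
  moreover have "h < p - 1" using p_minus_1_eq p_gt_2 by simp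
  ultimately have "[s * n + (p - 1) = h] (mod p - 1) \<longleftrightarrow> s * n = h"
    unfolding cong_def by (simp only: mod_add_self2 mod_less)
  then show ?thesis using h_eq n_gt_1 by (simp add: mult.commute)
qed

lemma not_cong_shift_half:
  assumes "i < n" and "j < n" and "i \<noteq> j"
  shows "\<not> [s * n + (j + (p - 1) - i) = h] (mod p - 1)"
proof
  assume "[s * n + (j + (p - 1) - i) = h] (mod p - 1)"
  then have "[s * n + (j + (p - 1) - i) = h] (mod n)" using n_dvd cong_dvd_modulus_nat by blast
  moreover have "[h = 0] (mod n)" using h_eq by (simp add: cong_0_iff)
  ultimately have "n dvd s * n + (j + (p - 1) - i)" using cong_trans cong_0_iff by blast
  moreover have "j + (p - 1) - i = (j + n - i) + n * (t - 1)"
    using p_minus_1_eq_n_t t_pos assms(1) by (simp add: algebra_simps)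
  ultimately have "n dvd j + n - i" by (simp add: dvd_add_right_iff dvd_add_left_iff)
  then obtain k where k: "j + n - i = n * k" by blast
  have bounds: "0 < j + n - i" "j + n - i < n * 2" "j + n - i \<noteq> n" using assms by auto
  then have "k \<noteq> 0" and "k < 2" using k by auto
  then have "k = 1" by simp
  then show False using k bounds(3) by simp
qed

lemma gauss_period_correlation:
  assumes "i < n" and "j < n"
  shows "(\<Sum>k<n. gauss_period (i + k) * gauss_period (j + k)) = (if i = j then (-1) ^ h * of_nat p else 0)"
proof -
  have "n \<le> p - 1" using p_minus_1_eq_n_t t_pos by simp
  then have "i \<le> p - 1" using assms(1) by simp
  then have "(\<Sum>k<n. gauss_period (i + k) * gauss_period (j + k))
      = (\<Sum>s<t. if [s * n + (j + (p - 1) - i) = h] (mod p - 1)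
                then (-1) ^ (s * n + (j + (p - 1) - i)) * of_nat p else 0)"
    by (simp only: gauss_period_correlation_eq_signed signed_conj_gauss_period_correlation)
  also have "\<dots> = (if i = j then (-1) ^ h * of_nat p else 0)"
  proof (cases "i = j")
    case True
    then have "(\<Sum>s<t. if [s * n + (j + (p - 1) - i) = h] (mod p - 1)
                then (-1) ^ (s * n + (j + (p - 1) - i)) * of_nat p else 0)
        = (\<Sum>s<t. if s = t div 2 then (-1) ^ (s * n + (p - 1)) * of_nat p else (0 :: complex))"
      using cong_shift_half_iff by (intro sum.cong refl) simp
    also have "\<dots> = (-1) ^ (h + 2 * h) * of_nat p"
      using t_pos h_eq p_minus_1_eq by (simp add: mult.commute)
    finally show ?thesis using True by (simp add: power_add power_mult)
  next
    case False
    then show ?thesis using not_cong_shift_half[OF assms False] by simp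
  qed
  finally show ?thesis .
qed

lemma sig_x_correlation:
  assumes "i < n" and "j < n"
  shows "(\<Sum>k<n. sig_x n p r lam (i + k) * sig_x n p r lam (j + k)) = (if i = j then (of_nat p)\<^sup>2 else 0)"
proof -
  have "(\<Sum>k<n. sig_x n p r lam (i + k) * sig_x n p r lam (j + k))
      = (u * u) * (\<Sum>k<n. gauss_period (i + k) * gauss_period (j + k))"
    by (simp add: sig_x_eq sum_distrib_left mult_ac)
  then show ?thesis
    using neg_one_power_mult_self[of h]
    by (simp add: gauss_period_correlation[OF assms] u_square power2_eq_square mult_ac)
qed

section \<open>The orthonormal basis\<close>

definition Q :: "nat \<Rightarrow> nat \<Rightarrow> real" where
  "Q i k = Re (sig_x n p r lam (i + k)) / real p"

lemma sig_x_eq_Q: "sig_x n p r lam (i + k) = complex_of_real (real p * Q i k)"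
  using cnj_sig_x[of "i + k"] p_gt_2 by (simp add: Q_def complex_eq_iff)

lemma Q_orthonormal:
  assumes "i < n" and "j < n"
  shows "(\<Sum>k<n. Q i k * Q j k) = (if i = j then 1 else 0)"
proof -
  have "complex_of_real (\<Sum>k<n. Q i k * Q j k)
      = (\<Sum>k<n. sig_x n p r lam (i + k) * sig_x n p r lam (j + k)) / (of_nat p)\<^sup>2"
    using p_gt_2 by (simp add: sig_x_eq_Q sum_divide_distrib power2_eq_square)
  also have "\<dots> = (if i = j then 1 else 0)"
    using p_gt_2 by (simp add: sig_x_correlation[OF assms])
  finally show ?thesis by (metis of_real_eq_1_iff of_real_eq_0_iff)
qed

lemma sig_gen_eq_Q:
  assumes "i < n"
  shows "complex_of_real (sqrt (1 / (real p)\<^sup>2)) * sig_gen n p r lam i m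
     = complex_of_real (\<Sum>l<n. real_of_int (Dn_basis i l) * Q l m)"
proof -
  have x0: "sig_x n p r lam m = complex_of_real (real p * Q 0 m)"
    using sig_x_eq_Q[of 0 m] by simp
  have x1: "sig_x n p r lam (m + 1) = complex_of_real (real p * Q 1 m)"
    using sig_x_eq_Q[of 1 m] by (simp add: add.commute)
  have "sig_gen n p r lam i m
      = complex_of_real (real p * (if i = 0 then Q 0 m + Q 1 m else Q (i - 1) m - Q i m))"
  proof (cases "i = 0")
    case True
    then show ?thesis unfolding sig_gen_def using x0 x1 by (simp add: algebra_simps)
  next
    case False
    then show ?thesis unfolding sig_gen_def by (simp only: sig_x_eq_Q if_False) (simp add: algebra_simps)
  qed
  moreover have "sqrt (1 / (real p)\<^sup>2) = 1 / real p" using p_gt_2 by (simp add: real_sqrt_divide)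
  ultimately show ?thesis
    using sum_Dn_basis_row[OF assms, of "\<lambda>l. Q l m"] n_gt_1 p_gt_2 by simp
qed

lemma phiM_eq:
  "phiM n p r lam =
     {(\<lambda>k. if k < n then complex_of_real (\<Sum>i<n. real_of_int (d i) * Q i k) else 0)
       | d :: nat \<Rightarrow> int. even (\<Sum>i<n. d i)}"
proof -
  define vec where
    "vec d = (\<lambda>k. if k < n then complex_of_real (\<Sum>i<n. real_of_int (d i) * Q i k) else 0)"
    for d :: "nat \<Rightarrow> int"
  have vec_cong: "vec d = vec d'" if "\<forall>l<n. d l = d' l" for d d'
  proof -
    have sums: "(\<Sum>i<n. real_of_int (d i) * Q i k) = (\<Sum>i<n. real_of_int (d' i) * Q i k)" for k
      using that by (intro sum.cong refl) simp
    show ?thesis unfolding vec_def sums by (rule refl)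
  qed
  have generator: "(\<lambda>m. if m < n then complex_of_real (sqrt (1 / (real p)\<^sup>2)) *
        (\<Sum>i<n. of_int (c i) * sig_gen n p r lam i m) else 0) = vec (\<lambda>l. \<Sum>i<n. c i * Dn_basis i l)"
    for c
  proof -
    have coordinates: "complex_of_real (sqrt (1 / (real p)\<^sup>2)) * (\<Sum>i<n. of_int (c i) * sig_gen n p r lam i m)
        = complex_of_real (\<Sum>l<n. real_of_int (\<Sum>i<n. c i * Dn_basis i l) * Q l m)" for m
    proof -
      have "complex_of_real (sqrt (1 / (real p)\<^sup>2)) * (\<Sum>i<n. of_int (c i) * sig_gen n p r lam i m)
          = (\<Sum>i<n. of_int (c i) * (complex_of_real (sqrt (1 / (real p)\<^sup>2)) * sig_gen n p r lam i m))"
        by (simp add: sum_distrib_left mult_ac)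
      also have "\<dots> = complex_of_real (\<Sum>i<n. real_of_int (c i) * (\<Sum>l<n. real_of_int (Dn_basis i l) * Q l m))"
        by (simp add: sig_gen_eq_Q)
      also have "(\<Sum>i<n. real_of_int (c i) * (\<Sum>l<n. real_of_int (Dn_basis i l) * Q l m))
          = (\<Sum>l<n. real_of_int (\<Sum>i<n. c i * Dn_basis i l) * Q l m)"
        unfolding sum_distrib_left sum_distrib_right of_int_sum of_int_mult
        by (subst sum.swap) (simp add: mult_ac)
      finally show ?thesis .
    qed
    show ?thesis unfolding vec_def coordinates by (rule refl)
  qed
  have "phiM n p r lam = {vec d | d. \<exists>c. \<forall>l<n. (\<Sum>i<n. c i * Dn_basis i l) = d l}"
  proof (intro equalityI subsetI)
    fix x assume "x \<in> phiM n p r lam"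
    then obtain c where "x = vec (\<lambda>l. \<Sum>i<n. c i * Dn_basis i l)"
      unfolding phiM_def generator by blast
    then show "x \<in> {vec d | d. \<exists>c. \<forall>l<n. (\<Sum>i<n. c i * Dn_basis i l) = d l}" by blast
  next
    fix x assume "x \<in> {vec d | d. \<exists>c. \<forall>l<n. (\<Sum>i<n. c i * Dn_basis i l) = d l}"
    then obtain d c where "x = vec d" and "\<forall>l<n. (\<Sum>i<n. c i * Dn_basis i l) = d l" by blast
    then have "x = vec (\<lambda>l. \<Sum>i<n. c i * Dn_basis i l)" using vec_cong by simp
    then show "x \<in> phiM n p r lam" unfolding phiM_def generator by blast
  qed
  also have "\<dots> = {vec d | d. even (\<Sum>i<n. d i)}"
    using n_gt_1 by (simp only: Dn_basis_combination_iff Suc_le_eq numeral_2_eq_2)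
  finally show ?thesis unfolding vec_def .
qed

end

theorem theorem2:
  fixes n p r :: nat and lam :: int
  assumes "n > 1" and "odd n" and "prime p" and "[p = 1] (mod n)"
    and "ord p r = p - 1"
    and "[lam * (int r - 1) = 1] (mod int p)"
  shows "\<exists>Q :: nat \<Rightarrow> nat \<Rightarrow> real.
           (\<forall>i<n. \<forall>j<n. (\<Sum>k<n. Q i k * Q j k) = (if i = j then 1 else 0)) \<and>
           phiM n p r lam =
             {(\<lambda>k. if k < n then complex_of_real (\<Sum>i<n. real_of_int (d i) * Q i k) else 0)
               | d :: nat \<Rightarrow> int. even (\<Sum>i<n. d i)}"
proof -
  have "n dvd p - 1" using assms(4) by (rule cong_to_1_nat)
  moreover have "p - 1 > 0" using assms(3) prime_gt_1_nat by simp
  ultimately have "n \<le> p - 1" by (rule dvd_imp_le)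
  with assms(1) have "p > 2" by linarith
  with assms \<open>n dvd p - 1\<close> interpret lattice_construction p r n lam
    by unfold_locales simp_all
  show ?thesis using Q_orthonormal phiM_eq by blast
qed

end
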